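(* Let $X_1,\dots,X_n$ be i.i.d. from $P$ and $\mathcal{S}_n=\{X_1,\dots,X_n\}$. Assume $\rho>0$ and that there exist $t_0>0$ and $C_2<\infty$ such that the function $t\mapsto\rho(t)$ (with $\rho(0):=\rho$) is differentiable on $[0,t_0]$ with $|\rho'(t)|\le C_2$ there. Then for all $n\ge1$ and all $0<t<\min\{\rho/(2C_2),\,t_0\}$, $$\mathbb{P}\big(H(\mathcal{S}_n,\mathbb{M})>t\big)\;\le\;\frac{2^{d+1}}{\rho\,t^d}\exp\Big(-\frac{n\rho\,t^d}{2}\Big).$$
   Context: $\mathbb{M}\subset\mathbb{R}^D$ is a compact $d$-dimensional smooth submanifold with positive reach and $P$ is a probability distribution with support $\mathbb{M}$. $B(x,r)$ is the closed Euclidean ball of radius $r$ about $x$. The Hausdorff distance between sets $A,B\subset\mathbb{R}^D$ is $H(A,B)=\max\{\sup_{a\in A}\inf_{b\in B}\|a-b\|,\ \sup_{b\in B}\inf_{a\in A}\|a-b\|\}$. For $x\in\mathbb{M}$ and $t>0$ define $\rho(x,t)=P(B(x,t/2))/t^d$, $\rho(t)=\inf_{x\in\mathbb{M}}\rho(x,t)$, and $\rho=\lim_{t\downarrow0}\rho(t)$ (assumed to exist). *)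

theory Defs
  imports "HOL-Analysis.Analysis" "HOL-Probability.Probability"
begin

text \<open>Hausdorff distance, as in the paper (for nonempty bounded sets).\<close>
definition hausdorff_dist :: "'a::metric_space set \<Rightarrow> 'a set \<Rightarrow> real" where
  "hausdorff_dist A B = max (SUP a\<in>A. infdist a B) (SUP b\<in>B. infdist b A)"

fun iter_deriv :: "'a::real_normed_vector list \<Rightarrow> ('a \<Rightarrow> 'b::real_normed_vector) \<Rightarrow> 'a \<Rightarrow> 'b" where
  "iter_deriv [] f = f"
| "iter_deriv (v # vs) f = (\<lambda>x. frechet_derivative (iter_deriv vs f) (at x) v)"

definition smooth_on :: "'a::real_normed_vector set \<Rightarrow> ('a \<Rightarrow> 'b::real_normed_vector) \<Rightarrow> bool" where
  "smooth_on S f \<longleftrightarrow> open S \<and> (\<forall>vs. iter_deriv vs f differentiable_on S)"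

definition smooth_submanifold :: "nat \<Rightarrow> 'a::euclidean_space set \<Rightarrow> bool" where
  "smooth_submanifold d M \<longleftrightarrow>
    (\<forall>p\<in>M. \<exists>W W' (\<Phi>::'a \<Rightarrow> 'a) \<Psi> L.
       open W \<and> p \<in> W \<and> open W' \<and> smooth_on W \<Phi> \<and> smooth_on W' \<Psi> \<and>
       \<Phi> ` W = W' \<and> (\<forall>x\<in>W. \<Psi> (\<Phi> x) = x) \<and> (\<forall>y\<in>W'. \<Phi> (\<Psi> y) = y) \<and>
       subspace L \<and> dim L = d \<and> \<Phi> ` (M \<inter> W) = W' \<inter> L)"

definition positive_reach :: "'a::euclidean_space set \<Rightarrow> bool" where
  "positive_reach M \<longleftrightarrow> (\<exists>r>0. \<forall>x. infdist x M < r \<longrightarrow> (\<exists>!y. y \<in> M \<and> dist x y = infdist x M))"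

definition measure_support :: "'a::topological_space measure \<Rightarrow> 'a set" where
  "measure_support P = \<Inter>{C. closed C \<and> C \<in> sets P \<and> measure P C = 1}"

definition rho_pt :: "'a::metric_space measure \<Rightarrow> nat \<Rightarrow> 'a \<Rightarrow> real \<Rightarrow> real" where
  "rho_pt P d x t = measure P (cball x (t/2)) / t ^ d"

definition rho_fun :: "'a::metric_space measure \<Rightarrow> 'a set \<Rightarrow> nat \<Rightarrow> real \<Rightarrow> real" where
  "rho_fun P M d t = (INF x\<in>M. rho_pt P d x t)"

end

theory Submission
  imports Defs
begin

(* A maximal t/2-separated subset F of M is a t/2-net of M, and the balls of radius t/4 about
   its points are disjoint, each of mass at least rho(t/2) (t/2)^d >= (rho/2) (t/2)^d; hence
   card F <= 2^(d+1) / (rho t^d). The samples lie in M almost surely, and if each ball B(x, t/2),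
   x in F, contains a sample then H(S_n, M) <= t. Such a ball has mass at least
   rho(t) t^d >= rho t^d / 2, so all n samples miss it with probability at most
   (1 - rho t^d / 2)^n <= exp(- n rho t^d / 2); a union bound over F concludes.
   The derivative bound is used only to get rho(s) >= rho/2 for 0 < s <= t. *)

lemma AE_in_measure_support:
  fixes P :: "'a::second_countable_topology measure"
  assumes "prob_space P" and sets_P: "sets P = sets borel"
  shows "AE x in P. x \<in> measure_support P"
proof -
  interpret prob_space P by fact
  define \<F> where "\<F> = uminus ` {C. closed C \<and> C \<in> sets P \<and> measure P C = 1}"
  obtain \<F>' where \<F>': "\<F>' \<subseteq> \<F>" "countable \<F>'" "\<Union>\<F>' = \<Union>\<F>"
    using Lindelof[of \<F>] unfolding \<F>_def by auto
  have null: "S \<in> null_sets P" if S: "S \<in> \<F>" for S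
  proof -
    obtain C where C: "C \<in> sets P" "measure P C = 1" "S = - C"
      using S unfolding \<F>_def by auto
    then have "S = space P - C"
      using sets_eq_imp_space_eq[OF sets_P] by auto
    then show ?thesis
      using C prob_compl[OF C(1)] by (simp add: emeasure_eq_measure null_sets_def)
  qed
  have "(\<Union>S\<in>\<F>'. S) \<in> null_sets P"
    using \<F>' null by (intro null_sets_UN') auto
  moreover have "- measure_support P = (\<Union>S\<in>\<F>'. S)"
    using \<F>'(3) unfolding \<F>_def measure_support_def by auto
  ultimately show ?thesis
    by (intro AE_I'[of "\<Union>S\<in>\<F>'. S"]) auto
qed

lemma ge_half_initial_value_of_deriv_bound:
  fixes g :: "real \<Rightarrow> real"
  assumes deriv: "\<forall>s\<in>{0..t0}. \<exists>g'. (g has_real_derivative g') (at s within {0..t0}) \<and> \<bar>g'\<bar> \<le> C"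
    and "0 \<le> s" "s \<le> t" "t \<le> t0" "2 * C * t < g 0"
  shows "g 0 / 2 \<le> g s"
proof -
  obtain g' where g': "\<And>s. s \<in> {0..t0} \<Longrightarrow> (g has_real_derivative g' s) (at s within {0..t0})"
      "\<And>s. s \<in> {0..t0} \<Longrightarrow> \<bar>g' s\<bar> \<le> C"
    using deriv by metis
  have "C \<ge> 0"
    using g'(2)[of 0] assms by force
  have "\<bar>g s - g 0\<bar> \<le> C * \<bar>s - 0\<bar>"
    using field_differentiable_bound[of "{0..t0}" g g' C s 0] g' assms by auto
  also have "\<dots> \<le> C * t"
    using assms \<open>C \<ge> 0\<close> by (simp add: mult_left_mono)
  finally show ?thesis
    using assms by linarith
qed

lemma measure_cball_ge_of_rho_fun_ge:
  assumes "x \<in> M" "0 < s" "a \<le> rho_fun P M d s"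
  shows "a * s ^ d \<le> measure P (cball x (s / 2))"
proof -
  have "a \<le> rho_pt P d x s"
    using assms(3) unfolding rho_fun_def
    by (rule order_trans, intro cINF_lower)
      (auto simp: assms bdd_below_def rho_pt_def intro!: exI[of _ 0] divide_nonneg_pos)
  then show ?thesis
    using assms by (simp add: rho_pt_def pos_le_divide_eq)
qed

definition separated :: "real \<Rightarrow> 'a::metric_space set \<Rightarrow> bool" where
  "separated \<delta> F \<longleftrightarrow> (\<forall>x\<in>F. \<forall>y\<in>F. x \<noteq> y \<longrightarrow> \<delta> < dist x y)"

lemma card_separated_le:
  fixes P :: "'a::metric_space measure"
  assumes "prob_space P" "sets P = sets borel" "c > 0"
    and "finite F" "separated (2 * r) F" "\<forall>x\<in>F. c \<le> measure P (cball x r)"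
  shows "real (card F) \<le> 1 / c"
proof -
  interpret prob_space P by fact
  have disjoint: "disjoint_family_on (\<lambda>x. cball x r) F"
    using \<open>separated (2 * r) F\<close>
    unfolding disjoint_family_on_def separated_def
    by (smt (verit) disjoint_iff dist_triangle2 mem_cball)
  then have "real (card F) * c \<le> (\<Sum>x\<in>F. measure P (cball x r))"
    using sum_mono[of F "\<lambda>_. c" "\<lambda>x. measure P (cball x r)"] assms by simp
  also have "\<dots> = measure P (\<Union>x\<in>F. cball x r)"
    using assms disjoint by (intro measure_finite_Union[symmetric]) auto
  finally have "real (card F) * c \<le> 1"
    using prob_le_1[of "\<Union>x\<in>F. cball x r"] by linarith
  then show ?thesis
    using \<open>c > 0\<close> by (simp add: field_simps)
qed

lemma obtain_net_card_le:
  fixes P :: "'a::metric_space measure"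
  assumes "prob_space P" "sets P = sets borel" "c > 0" "r \<ge> 0"
    and "\<forall>x\<in>M. c \<le> measure P (cball x r)"
  obtains F where "finite F" "F \<subseteq> M" "real (card F) \<le> 1 / c"
    "\<forall>m\<in>M. \<exists>x\<in>F. dist m x \<le> 2 * r"
proof -
  define packing where "packing F \<longleftrightarrow> finite F \<and> F \<subseteq> M \<and> separated (2 * r) F" for F
  have card_le: "real (card F) \<le> 1 / c" if "packing F" for F
    using card_separated_le[OF assms(1-3), of F r] assms(5) that unfolding packing_def by auto
  have "card F < nat \<lfloor>1 / c\<rfloor> + 1" if "packing F" for F
    using card_le[OF that] by linarith
  moreover have "packing {}"
    by (simp add: packing_def separated_def)
  ultimately obtain F where F: "packing F" and maximal: "\<And>G. packing G \<Longrightarrow> card G \<le> card F"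
    using ex_has_greatest_nat[of packing "{}" card] by blast
  have "\<exists>x\<in>F. dist m x \<le> 2 * r" if "m \<in> M" for m
  proof (rule ccontr)
    assume "\<not> ?thesis"
    then have "packing (insert m F)" "m \<notin> F"
      using F \<open>m \<in> M\<close> \<open>r \<ge> 0\<close> unfolding packing_def separated_def
      by (auto simp: dist_commute)
    then show False
      using maximal[of "insert m F"] F unfolding packing_def by simp
  qed
  then show ?thesis
    using that F card_le[OF F] unfolding packing_def by blast
qed

lemma measure_PiM_avoid_le_exp:
  assumes "prob_space P" "A \<in> sets P"
  shows "measure (PiM {..<n} (\<lambda>_. P))
           {X \<in> space (PiM {..<n} (\<lambda>_. P)). \<forall>i<n. X i \<notin> A}
         \<le> exp (- real n * measure P A)"
proof -
  interpret P: prob_space P by fact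
  interpret product_sigma_finite "\<lambda>_. P"
    by standard
  have "{X \<in> space (PiM {..<n} (\<lambda>_. P)). \<forall>i<n. X i \<notin> A} = PiE {..<n} (\<lambda>_. space P - A)"
    unfolding space_PiM PiE_iff set_eq_iff by auto
  also have "emeasure (PiM {..<n} (\<lambda>_. P)) \<dots> = (\<Prod>i<n. emeasure P (space P - A))"
    using assms(2) by (intro emeasure_PiM) auto
  also have "\<dots> = ennreal ((1 - measure P A) ^ n)"
    using P.prob_compl[OF assms(2)] assms(2)
    by (simp add: P.emeasure_eq_measure ennreal_power P.prob_le_1)
  finally have "measure (PiM {..<n} (\<lambda>_. P)) {X \<in> space (PiM {..<n} (\<lambda>_. P)). \<forall>i<n. X i \<notin> A}
      = (1 - measure P A) ^ n"
    using P.prob_le_1[of A] by (intro measure_eq_emeasure_eq_ennreal) auto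
  also have "\<dots> \<le> exp (- measure P A) ^ n"
    using exp_ge_add_one_self[of "- measure P A"] by (intro power_mono) auto
  also have "\<dots> = exp (- real n * measure P A)"
    by (simp add: exp_of_nat_mult[symmetric])
  finally show ?thesis .
qed

lemma hausdorff_dist_le:
  fixes S M :: "'a::metric_space set"
  assumes "S \<noteq> {}" "S \<subseteq> M" "\<forall>m\<in>M. \<exists>s\<in>S. dist m s \<le> t"
  shows "hausdorff_dist S M \<le> t"
proof -
  obtain a where "a \<in> S"
    using assms(1) by blast
  then obtain s where "dist a s \<le> t"
    using assms(2,3) by blast
  then have "t \<ge> 0"
    using zero_le_dist[of a s] by linarith
  then have "(SUP a\<in>S. infdist a M) \<le> t"
    using assms by (intro cSUP_least) auto
  moreover have "(SUP b\<in>M. infdist b S) \<le> t"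
    using assms by (intro cSUP_least) (auto intro: infdist_le2)
  ultimately show ?thesis
    unfolding hausdorff_dist_def by simp
qed

lemma hausdorff_dist_sample_le_of_net_hit:
  fixes X :: "nat \<Rightarrow> 'a::metric_space"
  assumes "0 < n" "\<forall>i<n. X i \<in> M"
    and "\<forall>m\<in>M. \<exists>x\<in>F. dist m x \<le> r" "\<forall>x\<in>F. \<exists>i<n. dist x (X i) \<le> r"
  shows "hausdorff_dist (X ` {..<n}) M \<le> 2 * r"
proof -
  have "\<exists>s\<in>X ` {..<n}. dist m s \<le> 2 * r" if "m \<in> M" for m
  proof -
    obtain x where "x \<in> F" "dist m x \<le> r"
      using assms(3) \<open>m \<in> M\<close> by blast
    moreover obtain i where "i < n" "dist x (X i) \<le> r"
      using assms(4) \<open>x \<in> F\<close> by blast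
    ultimately show ?thesis
      using dist_triangle[of m "X i" x] by force
  qed
  then show ?thesis
    using assms(1,2) by (intro hausdorff_dist_le) auto
qed

lemma hausdorff_dist_sample_tail_le:
  fixes P :: "'a::metric_space measure"
  assumes "prob_space P" "sets P = sets borel" "AE x in P. x \<in> M"
    and "finite F" "\<forall>m\<in>M. \<exists>x\<in>F. dist m x \<le> r" "\<forall>x\<in>F. p \<le> measure P (cball x r)"
    and "0 < n"
  shows "measure (PiM {..<n} (\<lambda>_. P))
           {X \<in> space (PiM {..<n} (\<lambda>_. P)). 2 * r < hausdorff_dist (X ` {..<n}) M}
         \<le> real (card F) * exp (- real n * p)"
proof -
  let ?Q = "PiM {..<n} (\<lambda>_. P)"
  interpret Q: prob_space ?Q
    by (rule prob_space_PiM) (rule assms(1))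
  define miss where "miss x = {X \<in> space ?Q. \<forall>i<n. X i \<notin> cball x r}" for x
  have "miss x = PiE {..<n} (\<lambda>_. space P - cball x r)" for x
    unfolding miss_def space_PiM PiE_iff set_eq_iff by auto
  then have miss_sets: "miss x \<in> sets ?Q" for x
    using assms(2) by (auto intro!: sets_PiM_I_finite)
  have "AE X in ?Q. \<forall>i\<in>{..<n}. X i \<in> M"
    using AE_PiM_component[of "{..<n}" "\<lambda>_. P"] assms(1,3) by (intro AE_finite_allI) auto
  then have "AE X in ?Q. 2 * r < hausdorff_dist (X ` {..<n}) M \<longrightarrow> X \<in> (\<Union>x\<in>F. miss x)"
  proof (rule AE_mp, intro AE_I2 impI)
    fix X assume X: "X \<in> space ?Q" "\<forall>i\<in>{..<n}. X i \<in> M" "2 * r < hausdorff_dist (X ` {..<n}) M"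
    show "X \<in> (\<Union>x\<in>F. miss x)"
    proof (rule ccontr)
      assume "X \<notin> (\<Union>x\<in>F. miss x)"
      then have "\<forall>x\<in>F. \<exists>i<n. dist x (X i) \<le> r"
        using X(1) unfolding miss_def by auto
      then have "hausdorff_dist (X ` {..<n}) M \<le> 2 * r"
        using X(2) assms(5,7) by (intro hausdorff_dist_sample_le_of_net_hit) auto
      then show False
        using X(3) by simp
    qed
  qed
  then have "measure ?Q {X \<in> space ?Q. 2 * r < hausdorff_dist (X ` {..<n}) M}
               \<le> measure ?Q (\<Union>x\<in>F. miss x)"
    using miss_sets assms(4) by (intro Q.finite_measure_mono_AE) auto
  also have "\<dots> \<le> (\<Sum>x\<in>F. measure ?Q (miss x))"
    using miss_sets assms(4) by (intro measure_UNION_le) auto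
  also have "\<dots> \<le> (\<Sum>x\<in>F. exp (- real n * p))"
  proof (intro sum_mono)
    fix x assume "x \<in> F"
    have "measure ?Q (miss x) \<le> exp (- real n * measure P (cball x r))"
      unfolding miss_def using assms(1,2) by (intro measure_PiM_avoid_le_exp) auto
    also have "\<dots> \<le> exp (- real n * p)"
      using assms(6) \<open>x \<in> F\<close> by (auto intro: mult_left_mono)
    finally show "measure ?Q (miss x) \<le> exp (- real n * p)" .
  qed
  finally show ?thesis
    by simp
qed

theorem mainTheorem2:
  fixes M :: "'a::euclidean_space set" and d :: nat and P :: "'a measure"
    and rho0 t0 C2 :: real and n :: nat and t :: real
  assumes "compact M" and "smooth_submanifold d M" and "positive_reach M"
    and "prob_space P" and "sets P = sets borel" and "measure_support P = M"
    and "((\<lambda>s. rho_fun P M d s) \<longlongrightarrow> rho0) (at_right 0)"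
    and "rho0 > 0" and "t0 > 0"
    and "\<forall>s\<in>{0..t0}. \<exists>r'. ((\<lambda>s. if s = 0 then rho0 else rho_fun P M d s)
            has_real_derivative r') (at s within {0..t0}) \<and> \<bar>r'\<bar> \<le> C2"
    and "n \<ge> 1" and "0 < t" and "t < t0" and "2 * C2 * t < rho0"
  shows "measure (PiM {..<n} (\<lambda>_. P))
           {X \<in> space (PiM {..<n} (\<lambda>_. P)). hausdorff_dist (X ` {..<n}) M > t}
         \<le> 2 ^ (d + 1) / (rho0 * t ^ d) * exp (- (real n * rho0 * t ^ d) / 2)"
proof -
  note prob = \<open>prob_space P\<close> and borel = \<open>sets P = sets borel\<close>
  have ball_mass: "rho0 / 2 * s ^ d \<le> measure P (cball x (s / 2))"
    if "x \<in> M" "0 < s" "s \<le> t" for x s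
    using ge_half_initial_value_of_deriv_bound[OF assms(10), of s t] that assms(13,14)
    by (intro measure_cball_ge_of_rho_fun_ge) auto
  define c where "c = rho0 / 2 * (t / 2) ^ d"
  have "0 < c" "\<forall>x\<in>M. c \<le> measure P (cball x (t / 4))"
    using ball_mass[of _ "t / 2"] assms(8,12) by (auto simp: c_def)
  then obtain F where F: "finite F" "F \<subseteq> M" "real (card F) \<le> 1 / c"
      "\<forall>m\<in>M. \<exists>x\<in>F. dist m x \<le> t / 2"
    using obtain_net_card_le[OF prob borel, of c "t / 4" M] assms(12) by auto
  have "\<forall>x\<in>F. rho0 / 2 * t ^ d \<le> measure P (cball x (t / 2))"
    using ball_mass[of _ t] F(2) assms(12) by auto
  then have "measure (PiM {..<n} (\<lambda>_. P))
           {X \<in> space (PiM {..<n} (\<lambda>_. P)). hausdorff_dist (X ` {..<n}) M > t}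
         \<le> real (card F) * exp (- (real n * rho0 * t ^ d) / 2)"
    using hausdorff_dist_sample_tail_le[OF prob borel _ F(1,4), of "rho0 / 2 * t ^ d" n]
      AE_in_measure_support[OF prob borel] assms(6,11) by (simp add: mult.assoc)
  also have "\<dots> \<le> 2 ^ (d + 1) / (rho0 * t ^ d) * exp (- (real n * rho0 * t ^ d) / 2)"
    using F(3) assms(8) by (intro mult_right_mono) (simp_all add: c_def power_divide field_simps)
  finally show ?thesis .
qed

end
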